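(* Let $n\ge2$ and let $v_1,\dots,v_k$ and $u_1,\dots,u_k$ be two collections of $k\le n-1$ normalized vectors in $\mathbb C^n$, and let $\mathcal V:=\{X\in M_n(\mathbb C):\ v_1^\ast Xu_1=\dots=v_k^\ast Xu_k=0\}$. If $A\in\mathcal V$ has $\mathrm{rk}\,A>k$, then $A$ is not left-symmetric relative to $\mathcal V$. In particular, $\mathcal V$ contains no invertible matrix that is left-symmetric relative to $\mathcal V$.
   Context: $M_n(\mathbb C)$ carries the operator (spectral) norm. $A\perp B$ (Birkhoff–James orthogonality) means $\|A+\lambda B\|\ge\|A\|$ for all $\lambda\in\mathbb C$. For a subset $\mathcal S$, an element $A\in\mathcal S$ is left-symmetric relative to $\mathcal S$ if for every $B\in\mathcal S$, $A\perp B$ implies $B\perp A$. *)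

theory Defs
  imports "HOL-Analysis.Analysis"
begin

definition opnorm :: "complex^'n^'n \<Rightarrow> real" where
  "opnorm A = onorm (\<lambda>x. A *v x)"

definition bj_orth :: "complex^'n^'n \<Rightarrow> complex^'n^'n \<Rightarrow> bool" where
  "bj_orth A B \<longleftrightarrow> (\<forall>c::complex. opnorm (\<chi> i j. A $ i $ j + c * B $ i $ j) \<ge> opnorm A)"

definition left_symmetric_rel :: "(complex^'n^'n) set \<Rightarrow> complex^'n^'n \<Rightarrow> bool" where
  "left_symmetric_rel S A \<longleftrightarrow> A \<in> S \<and> (\<forall>B\<in>S. bj_orth A B \<longrightarrow> bj_orth B A)"

definition sesq :: "complex^'n \<Rightarrow> complex^'n^'n \<Rightarrow> complex^'n \<Rightarrow> complex" where
  "sesq v X u = (\<Sum>i\<in>UNIV. cnj (v $ i) * ((X *v u) $ i))"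

end

theory Submission
  imports Defs
begin

text \<open>Choose a unit vector \<open>x0\<close> with \<open>\<parallel>A x0\<parallel> = \<parallel>A\<parallel>\<close> and put \<open>w = A x0\<close>. Any \<open>B\<close> with
  \<open>B x0 \<bottom> w\<close> satisfies \<open>A \<bottom> B\<close>. Let \<open>P\<close> be the orthogonal projection onto \<open>x0\<^sup>\<bottom>\<close>;
  maximality of \<open>x0\<close> gives \<open>\<langle>w, A h\<rangle> = \<parallel>A\<parallel>\<^sup>2 \<langle>x0, h\<rangle>\<close>, so \<open>A P\<close> maps into \<open>w\<^sup>\<bottom>\<close>.
  For an orthogonal projection \<open>E\<close> with \<open>B = E A P \<noteq> 0\<close> we get \<open>A \<bottom> B\<close> (as \<open>B x0 = 0\<close>)
  but \<open>\<parallel>B - t A\<parallel> < \<parallel>B\<parallel>\<close> for small \<open>t > 0\<close>, so not \<open>B \<bottom> A\<close>.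

  If all \<open>v\<^sub>i \<bottom> w\<close>, then \<open>B = A P\<close> lies in \<open>\<V>\<close>. If the range of \<open>A P\<close> leaves
  \<open>span {v\<^sub>i}\<close>, take \<open>E = y y\<^sup>*\<close> for a unit \<open>y \<bottom> v\<^sub>1, \<dots>, v\<^sub>k\<close> not orthogonal to that range;
  then \<open>B \<in> \<V>\<close>. Otherwise the range of \<open>A P\<close> lies in \<open>span {v\<^sub>i} \<inter> w\<^sup>\<bottom>\<close>, of dimension
  \<open>< k\<close> because some \<open>v\<^sub>j\<close> is not orthogonal to \<open>w\<close>, whence \<open>rank A \<le> k\<close>. Finally, if
  \<open>A P = 0\<close> then \<open>A\<close> has rank one, so \<open>k = 0\<close>, and an explicit witness works.\<close>

section \<open>The complex inner product on \<open>complex^'n\<close>\<close>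

definition cinner :: "complex^'n \<Rightarrow> complex^'n \<Rightarrow> complex" where
  "cinner x y = (\<Sum>i\<in>UNIV. cnj (x $ i) * y $ i)"

lemma cinner_add_left: "cinner (x + y) z = cinner x z + cinner y z"
  by (simp add: cinner_def distrib_right sum.distrib)

lemma cinner_add_right: "cinner x (y + z) = cinner x y + cinner x z"
  by (simp add: cinner_def distrib_left sum.distrib)

lemma cinner_diff_left: "cinner (x - y) z = cinner x z - cinner y z"
  by (simp add: cinner_def left_diff_distrib sum_subtractf)

lemma cinner_diff_right: "cinner x (y - z) = cinner x y - cinner x z"
  by (simp add: cinner_def right_diff_distrib sum_subtractf)

lemma cinner_scale_left: "cinner (c *s x) y = cnj c * cinner x y"
  by (simp add: cinner_def sum_distrib_left algebra_simps)

lemma cinner_scale_right: "cinner x (c *s y) = c * cinner x y"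
  by (simp add: cinner_def sum_distrib_left algebra_simps)

lemma cinner_zero_left [simp]: "cinner 0 x = 0"
  and cinner_zero_right [simp]: "cinner x 0 = 0"
  by (simp_all add: cinner_def)

lemmas cinner_simps = cinner_add_left cinner_add_right cinner_diff_left cinner_diff_right
  cinner_scale_left cinner_scale_right

lemma cnj_cinner: "cnj (cinner x y) = cinner y x"
  by (simp add: cinner_def mult.commute)

lemma cinner_commute_zero: "cinner x y = 0 \<longleftrightarrow> cinner y x = 0"
  by (metis cnj_cinner complex_cnj_zero)

lemma cinner_sum_right: "cinner x (sum f S) = (\<Sum>g\<in>S. cinner x (f g))"
  by (simp add: cinner_def sum_distrib_left) (rule sum.swap)

lemma cinner_axis_right: "cinner x (axis i 1) = cnj (x $ i)"
  by (simp add: cinner_def axis_def if_distrib sum.If_cases cong: if_cong)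

lemma inner_eq_Re_cinner: "x \<bullet> y = Re (cinner x y)"
  by (simp add: cinner_def inner_vec_def inner_complex_def)

lemma cinner_self: "cinner x x = complex_of_real ((norm x)^2)"
proof -
  have "Re (cinner x x) = (norm x)^2"
    by (simp add: power2_norm_eq_inner inner_eq_Re_cinner)
  moreover have "Im (cinner x x) = 0"
    by (simp add: cinner_def)
  ultimately show ?thesis
    by (simp add: complex_eq_iff)
qed

lemma norm_power2_eq_Re_cinner: "(norm x)^2 = Re (cinner x x)"
  by (simp add: cinner_self)

lemma cnj_mult_self: "cnj c * c = complex_of_real ((cmod c)^2)"
  by (metis complex_norm_square mult.commute)

lemma norm_smult_vec: "norm (c *s (x::complex^'n)) = cmod c * norm x"
proof -
  have "cinner (c *s x) (c *s x) = cnj c * c * cinner x x"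
    by (simp add: cinner_simps)
  then have "(norm (c *s x))^2 = Re (cnj c * c * cinner x x)"
    by (simp only: norm_power2_eq_Re_cinner)
  also have "\<dots> = (cmod c * norm x)^2"
    unfolding cnj_mult_self cinner_self by (simp add: power_mult_distrib del: of_real_power)
  finally show ?thesis
    by simp
qed

lemma pythagoras_cinner:
  assumes "cinner x y = 0"
  shows "(norm (x + y))^2 = (norm x)^2 + (norm y)^2"
proof -
  have "cinner y x = 0"
    using assms cinner_commute_zero by blast
  with assms show ?thesis
    by (simp add: norm_power2_eq_Re_cinner cinner_simps)
qed

lemma norm_power2_orthogonal_combination:
  "cinner x y = 0 \<Longrightarrow> (norm (a *s x + b *s y))^2 = (cmod a * norm x)^2 + (cmod b * norm y)^2"
  by (simp add: pythagoras_cinner cinner_simps norm_smult_vec)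

lemma scaleR_eq_smult_vec: "r *\<^sub>R (x::complex^'n) = complex_of_real r *s x"
  by (simp only: vec_eq_iff vector_scaleR_component vector_smult_component)
    (simp add: scaleR_conv_of_real)

lemma matrix_vector_mult_smult: "(A::complex^'n^'m) *v (c *s x) = c *s (A *v x)"
  by (simp add: vec.scale)

lemma matrix_vector_mult_scaleR_complex: "(A::complex^'n^'m) *v (r *\<^sub>R x) = r *\<^sub>R (A *v x)"
  by (simp add: scaleR_eq_smult_vec matrix_vector_mult_smult)

lemma norm_smult_inverse_norm:
  fixes x :: "complex^'n"
  assumes "x \<noteq> 0"
  shows "norm (complex_of_real (1 / norm x) *s x) = 1"
  using assms by (simp add: norm_smult_vec norm_divide)

lemma cmod_cinner_le: "cmod (cinner x y) \<le> norm x * norm y"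
proof (cases "cinner x y = 0")
  case False
  define c where "c = cinner x y / cmod (cinner x y)"
  have "cmod (cinner x y) = (c *s x) \<bullet> y"
    using False by (simp add: inner_eq_Re_cinner cinner_scale_left c_def
        complex_norm_square[symmetric] field_simps power2_eq_square)
  also have "\<dots> \<le> norm (c *s x) * norm y"
    by (rule norm_cauchy_schwarz)
  also have "\<dots> = norm x * norm y"
    using False by (simp add: norm_smult_vec c_def norm_divide)
  finally show ?thesis .
qed simp

lemma bessel_orthonormal_pair:
  fixes x0 e x :: "complex^'n"
  assumes "norm x0 = 1" and "norm e = 1" and "cinner x0 e = 0"
  shows "(cmod (cinner x0 x))^2 + (cmod (cinner e x))^2 \<le> (norm x)^2"
proof -
  define a where "a = cinner x0 x"
  define b where "b = cinner e x"
  define p where "p = a *s x0 + b *s e"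
  have "cinner e x0 = 0"
    using assms(3) cinner_commute_zero by blast
  moreover have "cinner x0 x0 = 1" and "cinner e e = 1"
    using assms by (simp_all add: cinner_self)
  ultimately have pp: "cinner p p = cnj a * a + cnj b * b"
    using assms by (simp add: p_def cinner_simps)
  moreover have "cinner p x = cnj a * a + cnj b * b"
    by (simp add: p_def cinner_simps a_def b_def)
  ultimately have "cinner p (x - p) = 0"
    by (simp add: cinner_diff_right)
  then have "(norm p)^2 \<le> (norm x)^2"
    using pythagoras_cinner[of p "x - p"] by simp
  moreover have "(norm p)^2 = (cmod a)^2 + (cmod b)^2"
    by (simp add: norm_power2_eq_Re_cinner pp cnj_mult_self)
  ultimately show ?thesis
    by (simp add: a_def b_def)
qed

lemma exists_unit_orthogonal:
  fixes x :: "complex^'n"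
  assumes "CARD('n) \<ge> 2"
  shows "\<exists>e. norm e = 1 \<and> cinner x e = 0"
proof (cases "x = 0")
  case True
  obtain e :: "complex^'n" where "norm e = 1"
    using vector_choose_size[of 1] by auto
  with True show ?thesis
    by auto
next
  case False
  then obtain i where "x $ i \<noteq> 0"
    by (auto simp: vec_eq_iff)
  have "\<not> (\<forall>j::'n. j = i)"
  proof
    assume "\<forall>j::'n. j = i"
    then have "(UNIV :: 'n set) = {i}"
      by auto
    then have "CARD('n) = card {i}"
      by (rule arg_cong)
    with assms show False
      by simp
  qed
  then obtain j :: 'n where "j \<noteq> i"
    by blast
  define e where "e = cnj (x $ j) *s axis i 1 - cnj (x $ i) *s axis j (1::complex)"
  have "e $ j \<noteq> 0"
    using \<open>j \<noteq> i\<close> \<open>x $ i \<noteq> 0\<close> by (simp add: e_def axis_def)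
  then have "e \<noteq> 0"
    by auto
  moreover have "cinner x e = 0"
    by (simp add: e_def cinner_diff_right cinner_scale_right cinner_axis_right)
  ultimately show ?thesis
    using norm_smult_inverse_norm[of e] by (auto simp: cinner_scale_right)
qed

definition outer :: "complex^'n \<Rightarrow> complex^'n \<Rightarrow> complex^'n^'n" where
  "outer y z = (\<chi> i j. y $ i * cnj (z $ j))"

lemma outer_mult_vec [simp]: "outer y z *v x = cinner z x *s y"
  by (simp add: outer_def cinner_def matrix_vector_mult_def vec_eq_iff sum_distrib_left
      algebra_simps)

lemma outer_self_positive:
  assumes "norm y = 1"
  shows "(outer y y *v z) \<bullet> z = (norm (outer y y *v z))^2"
  using assms by (simp add: inner_eq_Re_cinner cinner_scale_left cnj_mult_self norm_smult_vec)

definition perp_proj :: "complex^'n \<Rightarrow> complex^'n^'n" where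
  "perp_proj e = mat 1 - outer e e"

lemma perp_proj_mult_vec: "perp_proj e *v x = x - cinner e x *s e"
  by (simp add: perp_proj_def matrix_vector_mult_diff_rdistrib)

context
  fixes e :: "complex^'n"
  assumes unit: "norm e = 1"
begin

lemma cinner_perp_proj: "cinner e (perp_proj e *v x) = 0"
  using unit by (simp add: perp_proj_mult_vec cinner_simps cinner_self)

lemma perp_proj_self: "perp_proj e *v e = 0"
  using unit by (simp add: perp_proj_mult_vec cinner_self)

lemma perp_proj_idem: "perp_proj e ** perp_proj e = perp_proj e"
  unfolding matrix_eq matrix_vector_mul_assoc[symmetric]
  by (simp add: perp_proj_mult_vec[of e "perp_proj e *v _"] cinner_perp_proj)

lemma perp_proj_pythagoras:
  "(norm (perp_proj e *v x))^2 + (norm (x - perp_proj e *v x))^2 = (norm x)^2"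
proof -
  have "cinner (perp_proj e *v x) e = 0"
    using cinner_perp_proj cinner_commute_zero by blast
  then have "cinner (perp_proj e *v x) (x - perp_proj e *v x) = 0"
    by (simp add: perp_proj_mult_vec[of e x] cinner_scale_right)
  then show ?thesis
    using pythagoras_cinner by fastforce
qed

end

section \<open>Rank and spans\<close>

lemma rank_le_card_if_range_in_span:
  fixes A :: "'a::field^'n^'m"
  assumes "finite G" and range: "\<And>x. A *v x \<in> vec.span G"
  shows "rank A \<le> card G"
proof -
  have "\<exists>u. A *v axis j 1 = (\<Sum>g\<in>G. u g *s g)" for j
    using range[of "axis j 1"] unfolding vec.span_finite[OF \<open>finite G\<close>] by auto
  then obtain c where c: "\<And>j. A *v axis j 1 = (\<Sum>g\<in>G. c j g *s g)"
    by metis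
  define F where "F = (\<lambda>g. \<chi> j. c j g) ` G"
  have "row i A \<in> vec.span F" for i
  proof -
    have "A $ i $ j = (A *v axis j 1) $ i" for j
      by (simp add: matrix_vector_mult_def axis_def if_distrib sum.If_cases)
    then have "row i A = (\<Sum>g\<in>G. (g $ i) *s (\<chi> j. c j g))"
      by (simp add: vec_eq_iff row_def c mult.commute)
    also have "\<dots> \<in> vec.span F"
      by (intro vec.span_sum vec.span_scale vec.span_base) (auto simp: F_def)
    finally show ?thesis .
  qed
  then have "rows A \<subseteq> vec.span F"
    by (auto simp: rows_def)
  then have "rank A \<le> vec.dim F"
    unfolding row_rank_def_gen by (rule vec.dim_mono)
  also have "\<dots> \<le> card F"
    using \<open>finite G\<close> by (simp add: F_def vec.dim_le_card')
  also have "\<dots> \<le> card G"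
    unfolding F_def using \<open>finite G\<close> by (rule card_image_le)
  finally show ?thesis .
qed

lemma rank_outer_le_one: "rank (outer w x) \<le> 1"
  using rank_le_card_if_range_in_span[of "{w}" "outer w x"]
  by (simp add: vec.span_scale vec.span_base)

lemma rank_invertible:
  fixes B :: "'a::field^'n^'n"
  assumes "invertible B"
  shows "rank B = CARD('n)"
proof -
  obtain B' where B': "B' ** B = mat 1"
    using assms unfolding invertible_def by blast
  have "axis i 1 \<in> vec.span (rows B)" for i
  proof -
    have "(\<Sum>l\<in>UNIV. B' $ i $ l * B $ l $ j) = (mat 1 :: 'a^'n^'n) $ i $ j" for j
      unfolding B'[symmetric] by (simp add: matrix_matrix_mult_def)
    then have "axis i 1 = (\<Sum>l\<in>UNIV. (B' $ i $ l) *s row l B)"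
      by (auto simp: vec_eq_iff row_def axis_def mat_def)
    also have "\<dots> \<in> vec.span (rows B)"
      by (intro vec.span_sum vec.span_scale vec.span_base) (auto simp: rows_def)
    finally show ?thesis .
  qed
  then have "cart_basis \<subseteq> vec.span (rows B)"
    by (auto simp: cart_basis_def)
  then have "vec.span cart_basis \<subseteq> vec.span (rows B)"
    by (metis vec.span_minimal vec.subspace_span)
  then have "UNIV \<subseteq> vec.span (rows B)"
    by (simp only: span_cart_basis)
  then have "vec.dim (UNIV :: ('a^'n) set) \<le> vec.dim (rows B)"
    by (rule vec.dim_mono)
  then have "CARD('n) \<le> rank B"
    by (simp only: vec_dim_card row_rank_def_gen)
  moreover have "rank B \<le> CARD('n)"
    using vec.dim_subset[of "rows B" UNIV] unfolding vec_dim_card row_rank_def_gen by simp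
  ultimately show ?thesis
    by simp
qed

text \<open>Real orthogonality to both \<open>g\<close> and \<open>\<i> g\<close> is orthogonality to \<open>g\<close> for \<open>cinner\<close>,
  so the real orthogonal decomposition along \<open>S \<union> \<i> S\<close> separates \<open>a\<close> from \<open>span S\<close>.\<close>
lemma exists_unit_orthogonal_not_orthogonal:
  fixes a :: "complex^'n"
  assumes "a \<notin> vec.span S"
  shows "\<exists>y. norm y = 1 \<and> (\<forall>g\<in>S. cinner y g = 0) \<and> cinner y a \<noteq> 0"
proof -
  define T where "T = S \<union> (\<lambda>g. \<i> *s g) ` S"
  have "span T \<subseteq> vec.span S"
  proof (rule span_minimal)
    show "T \<subseteq> vec.span S"
      by (auto simp: T_def intro: vec.span_base vec.span_scale)
    show "subspace (vec.span S)"
      unfolding subspace_def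
      by (auto simp: scaleR_eq_smult_vec intro: vec.span_zero vec.span_add vec.span_scale)
  qed
  obtain p z where p: "p \<in> span T" and z: "\<And>w. w \<in> span T \<Longrightarrow> orthogonal z w"
    and apz: "a = p + z"
    using orthogonal_subspace_decomp_exists[of T a] by blast
  have zT: "Re (cinner z g) = 0" if "g \<in> T" for g
    using z[of g] that span_base[of g T] by (simp add: orthogonal_def inner_eq_Re_cinner)
  have "cinner z g = 0" if "g \<in> S" for g
    using zT[of g] zT[of "\<i> *s g"] that by (simp add: T_def cinner_scale_right complex_eq_iff)
  moreover have "cinner z a \<noteq> 0"
  proof
    assume "cinner z a = 0"
    moreover have "z \<bullet> p = 0"
      using z[OF p] by (simp add: orthogonal_def)
    moreover from \<open>cinner z a = 0\<close> have "z \<bullet> a = 0"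
      by (simp add: inner_eq_Re_cinner)
    ultimately have "z \<bullet> z = 0"
      by (simp add: apz inner_add_right)
    then have "z = 0"
      by simp
    then show False
      using assms apz p \<open>span T \<subseteq> vec.span S\<close> by auto
  qed
  moreover from this have "z \<noteq> 0"
    by auto
  ultimately show ?thesis
    using norm_smult_inverse_norm[of z]
    by (intro exI[of _ "complex_of_real (1 / norm z) *s z"]) (simp add: cinner_scale_left)
qed

text \<open>The vectors of \<open>span S\<close> orthogonal to \<open>w\<close> are spanned by the projections
  \<open>g - (\<langle>w, g\<rangle> / \<langle>w, v\<rangle>) v\<close> of the other members of \<open>S\<close> along \<open>v\<close>.\<close>
lemma orthogonal_part_of_span:
  fixes w v :: "complex^'n"
  assumes "finite S" and "v \<in> S" and "cinner w v \<noteq> 0"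
  obtains F where "finite F" and "card F < card S"
    and "\<And>z. z \<in> vec.span S \<Longrightarrow> cinner w z = 0 \<Longrightarrow> z \<in> vec.span F"
proof
  define f where "f g = g - (cinner w g / cinner w v) *s v" for g
  show "finite (f ` (S - {v}))"
    using assms(1) by simp
  show "card (f ` (S - {v})) < card S"
    using assms(1,2) card_image_le[of "S - {v}" f] card_Diff1_less[of S v] by simp
  fix z
  assume "z \<in> vec.span S" and "cinner w z = 0"
  then obtain u where z: "z = (\<Sum>g\<in>S. u g *s g)"
    unfolding vec.span_finite[OF assms(1)] by blast
  have "(\<Sum>g\<in>S. u g * (cinner w g / cinner w v)) = cinner w z / cinner w v"
    by (simp add: z cinner_sum_right cinner_scale_right sum_divide_distrib)
  moreover have "(\<Sum>g\<in>S. u g *s f g) = z - (\<Sum>g\<in>S. u g * (cinner w g / cinner w v)) *s v"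
    by (simp add: f_def z sum_subtractf vec.scale_sum_left)
  ultimately have "z = (\<Sum>g\<in>S. u g *s f g)"
    using \<open>cinner w z = 0\<close> by simp
  also have "\<dots> = (\<Sum>g\<in>S - {v}. u g *s f g)"
    using assms by (simp add: f_def sum.remove)
  also have "\<dots> \<in> vec.span (f ` (S - {v}))"
    by (intro vec.span_sum vec.span_scale vec.span_base) auto
  finally show "z \<in> vec.span (f ` (S - {v}))" .
qed

section \<open>Operator norm and Birkhoff--James orthogonality\<close>

lemma matrix_vector_mult_lincomb:
  "(\<chi> i j. (B::complex^'n^'n) $ i $ j + c * A $ i $ j) *v x = B *v x + c *s (A *v x)"
  by (simp add: matrix_vector_mult_def vec_eq_iff sum.distrib sum_distrib_left algebra_simps)

lemma norm_matrix_vector_le_opnorm: "norm (A *v x) \<le> opnorm A * norm x"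
  unfolding opnorm_def by (rule onorm) simp

lemma opnorm_le: "(\<And>x. norm (A *v x) \<le> b * norm x) \<Longrightarrow> opnorm (A::complex^'n^'n) \<le> b"
  unfolding opnorm_def by (rule onorm_le)

lemma opnorm_nonneg: "0 \<le> opnorm A"
  unfolding opnorm_def by (rule onorm_pos_le) simp

lemma opnorm_pos:
  assumes "A \<noteq> 0"
  shows "0 < opnorm A"
proof -
  have "opnorm A \<noteq> 0"
  proof
    assume "opnorm A = 0"
    then have "A *v x = 0 *v x" for x
      using norm_matrix_vector_le_opnorm[of A x] by simp
    with assms show False
      by (simp add: matrix_eq)
  qed
  then show ?thesis
    using opnorm_nonneg[of A] by simp
qed

lemma opnorm_attained: "\<exists>x0. norm x0 = 1 \<and> norm (A *v x0) = opnorm A"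
proof -
  let ?S = "sphere (0::complex^'n) 1"
  have "?S \<noteq> {}"
    by simp
  moreover have "continuous_on ?S (\<lambda>x. norm (A *v x))"
    by (intro continuous_intros)
  ultimately obtain x0 where x0: "x0 \<in> ?S" and max: "\<forall>y\<in>?S. norm (A *v y) \<le> norm (A *v x0)"
    using continuous_attains_sup[OF compact_sphere] by blast
  have "norm (A *v y) \<le> norm (A *v x0) * norm y" for y
  proof (cases "y = 0")
    case False
    then have "norm (A *v ((1 / norm y) *\<^sub>R y)) \<le> norm (A *v x0)"
      using max by simp
    with False show ?thesis
      by (simp add: matrix_vector_mult_scaleR_complex field_simps)
  qed simp
  then have "opnorm A \<le> norm (A *v x0)"
    by (rule opnorm_le)
  moreover have "norm (A *v x0) \<le> opnorm A"
    using norm_matrix_vector_le_opnorm[of A x0] x0 by simp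
  ultimately show ?thesis
    using x0 by (intro exI[of _ x0]) simp
qed

lemma linear_coeff_zero_if_quadratic_nonpos:
  fixes d e :: real
  assumes "\<And>t. 2 * t * d + t^2 * e \<le> 0"
  shows "d = 0"
proof (rule ccontr)
  assume "d \<noteq> 0"
  define m where "m = \<bar>e\<bar> + 1"
  have "m > 0"
    by (simp add: m_def)
  have "2 * (d / m) * d + (d / m)^2 * e = (d^2 / m^2) * (2 * m + e)"
    using \<open>m > 0\<close> by (simp add: field_simps power2_eq_square)
  also have "\<dots> > 0"
    using \<open>d \<noteq> 0\<close> \<open>m > 0\<close> by (intro mult_pos_pos) (auto simp: m_def abs_if)
  finally show False
    using assms[of "d / m"] by linarith
qed

locale norming_vector =
  fixes A :: "complex^'n^'n" and x0 :: "complex^'n"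
  assumes norm_x0: "norm x0 = 1" and norm_image_x0: "norm (A *v x0) = opnorm A"
begin

lemma bj_orth_if_orthogonal_image:
  assumes "cinner (A *v x0) (B *v x0) = 0"
  shows "bj_orth A B"
  unfolding bj_orth_def
proof
  fix c :: complex
  let ?M = "\<chi> i j. A $ i $ j + c * B $ i $ j"
  have "cinner (A *v x0) (c *s (B *v x0)) = 0"
    by (simp add: cinner_scale_right assms)
  then have "(norm (A *v x0))^2 \<le> (norm (?M *v x0))^2"
    by (simp add: matrix_vector_mult_lincomb pythagoras_cinner)
  then have "norm (A *v x0) \<le> norm (?M *v x0)"
    by (simp add: power2_le_iff_abs_le)
  also have "\<dots> \<le> opnorm ?M"
    using norm_matrix_vector_le_opnorm[of ?M x0] norm_x0 by simp
  finally show "opnorm A \<le> opnorm ?M"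
    by (simp add: norm_image_x0)
qed

text \<open>First-order optimality of the norming vector: the real quadratic
  \<open>\<parallel>A(x0 + t h)\<parallel>\<^sup>2 - \<parallel>A\<parallel>\<^sup>2 \<parallel>x0 + t h\<parallel>\<^sup>2\<close> is nonpositive and vanishes at \<open>t = 0\<close>.\<close>
lemma inner_image_x0: "(A *v x0) \<bullet> (A *v h) = (opnorm A)^2 * (x0 \<bullet> h)"
proof -
  let ?s = "opnorm A" and ?w = "A *v x0"
  have "2 * t * (?w \<bullet> (A *v h) - ?s^2 * (x0 \<bullet> h))
      + t^2 * ((A *v h) \<bullet> (A *v h) - ?s^2 * (h \<bullet> h)) \<le> 0" for t :: real
  proof -
    have "(norm (A *v (x0 + t *\<^sub>R h)))^2 \<le> (?s * norm (x0 + t *\<^sub>R h))^2"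
      by (simp add: power_mono norm_matrix_vector_le_opnorm)
    then have "(?w + t *\<^sub>R (A *v h)) \<bullet> (?w + t *\<^sub>R (A *v h))
        \<le> ?s^2 * ((x0 + t *\<^sub>R h) \<bullet> (x0 + t *\<^sub>R h))"
      by (simp add: matrix_vector_right_distrib matrix_vector_mult_scaleR_complex
          power_mult_distrib power2_norm_eq_inner)
    moreover have "x0 \<bullet> x0 = 1" and "?w \<bullet> ?w = ?s^2"
      using norm_x0 norm_image_x0 by (simp_all add: dot_square_norm)
    ultimately show ?thesis
      by (simp add: inner_commute power2_eq_square algebra_simps)
  qed
  then have "?w \<bullet> (A *v h) - ?s^2 * (x0 \<bullet> h) = 0"
    by (rule linear_coeff_zero_if_quadratic_nonpos)
  then show ?thesis
    by simp
qed

lemma cinner_image_x0: "cinner (A *v x0) (A *v h) = (opnorm A)^2 * cinner x0 h"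
proof -
  have Re: "Re (cinner (A *v x0) (A *v h)) = (opnorm A)^2 * Re (cinner x0 h)" for h
    using inner_image_x0[of h] by (simp add: inner_eq_Re_cinner)
  have "Re (-\<i> * cinner (A *v x0) (A *v h)) = (opnorm A)^2 * Re (-\<i> * cinner x0 h)"
    using Re[of "(-\<i>) *s h"] unfolding matrix_vector_mult_smult cinner_scale_right .
  then show ?thesis
    using Re[of h] by (simp add: complex_eq_iff)
qed

end

lemma perturbation_estimate:
  fixes p q r a c t \<beta> K :: real
  assumes "0 \<le> p" "p \<le> \<beta> * a" "p^2 - p * K * c \<le> q" "r^2 \<le> K^2 * (a^2 + c^2)"
    and "0 \<le> c" "0 < K" "0 < t" "t \<le> 1/2" "2 * t * K^2 \<le> \<beta>^2"
  shows "p^2 - 2 * t * q + t^2 * r^2 \<le> (1 - t/2) * \<beta>^2 * (a^2 + c^2)"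
proof -
  have "p^2 - 2 * t * q + t^2 * r^2 \<le> (1 - 2*t) * p^2 + 2 * t * (p * (K * c)) + t^2 * (K^2 * (a^2 + c^2))"
  proof -
    have "2 * t * (p^2 - p * K * c) \<le> 2 * t * q"
      using assms(3,7) by (intro mult_left_mono) auto
    moreover have "t^2 * r^2 \<le> t^2 * (K^2 * (a^2 + c^2))"
      using assms(4) by (intro mult_left_mono) auto
    ultimately show ?thesis
      by (simp add: algebra_simps)
  qed
  also have "\<dots> \<le> (1 - 2*t) * (\<beta> * a)^2 + t * ((\<beta> * a)^2 + (K * c)^2) + t^2 * (K^2 * (a^2 + c^2))"
  proof -
    have "(1 - 2*t) * p^2 \<le> (1 - 2*t) * (\<beta> * a)^2"
      using assms(1,2,8) by (intro mult_left_mono power_mono) auto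
    moreover have "p * (K * c) \<le> \<beta> * a * (K * c)"
      using assms(2,5,6) by (intro mult_right_mono) auto
    then have "t * (2 * (p * (K * c))) \<le> t * ((\<beta> * a)^2 + (K * c)^2)"
      using assms(7) sum_squares_bound[of "\<beta> * a" "K * c"] by (intro mult_left_mono) auto
    ultimately show ?thesis
      by linarith
  qed
  also have "\<dots> = ((1 - t) * \<beta>^2 + t * (t * K^2)) * a^2 + t * K^2 * (1 + t) * c^2"
    by (simp add: algebra_simps power2_eq_square)
  also have "\<dots> \<le> (1 - t/2) * \<beta>^2 * a^2 + (1 - t/2) * \<beta>^2 * c^2"
  proof (rule add_mono; rule mult_right_mono)
    have "t * (t * K^2) \<le> t * (\<beta>^2 / 2)"
      using assms(7,9) by (intro mult_left_mono) (auto simp: algebra_simps)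
    then show "(1 - t) * \<beta>^2 + t * (t * K^2) \<le> (1 - t/2) * \<beta>^2"
      by (simp add: algebra_simps)
    have "t * K^2 * (1 + t) \<le> \<beta>^2 / 2 * (3/2)"
      using assms(7-9) by (intro mult_mono) (auto simp: algebra_simps)
    also have "\<dots> \<le> (1 - t/2) * \<beta>^2"
      using assms(8) mult_right_mono[of t "1/2" "\<beta>^2"] by (simp add: algebra_simps)
    finally show "t * K^2 * (1 + t) \<le> (1 - t/2) * \<beta>^2" .
  qed simp_all
  finally show ?thesis
    by (simp add: distrib_left distrib_right)
qed

lemma norm_perturbed_compression_le:
  fixes A B P :: "complex^'n^'n"
  assumes BP: "B ** P = B"
    and P: "(norm (P *v x))^2 + (norm (x - P *v x))^2 = (norm x)^2"
    and pos: "(norm (B *v x))^2 \<le> (B *v x) \<bullet> (A *v (P *v x))"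
    and "opnorm A \<le> K" and "0 < K" and t: "0 < t" "t \<le> 1/2" "2 * t * K^2 \<le> (opnorm B)^2"
  shows "(norm (B *v x - t *\<^sub>R (A *v x)))^2 \<le> (1 - t/2) * (opnorm B)^2 * (norm x)^2"
proof -
  let ?a = "norm (P *v x)" and ?c = "norm (x - P *v x)"
  have AK: "norm (A *v y) \<le> K * norm y" for y
    using norm_matrix_vector_le_opnorm[of A y] \<open>opnorm A \<le> K\<close> by (metis mult_right_mono norm_ge_zero order_trans)
  have "(norm (B *v x - t *\<^sub>R (A *v x)))^2
      = (norm (B *v x))^2 - 2 * t * ((B *v x) \<bullet> (A *v x)) + t^2 * (norm (A *v x))^2"
    unfolding power2_norm_eq_inner by (simp add: inner_diff inner_commute power2_eq_square)
  also have "\<dots> \<le> (1 - t/2) * (opnorm B)^2 * (?a^2 + ?c^2)"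
  proof (rule perturbation_estimate[OF _ _ _ _ _ \<open>0 < K\<close> t])
    have "B *v (P *v x) = B *v x"
      by (simp add: matrix_vector_mul_assoc BP)
    then show "norm (B *v x) \<le> opnorm B * ?a"
      by (metis norm_matrix_vector_le_opnorm)
    have "\<bar>(B *v x) \<bullet> (A *v (x - P *v x))\<bar> \<le> norm (B *v x) * norm (A *v (x - P *v x))"
      by (rule Cauchy_Schwarz_ineq2)
    also have "\<dots> \<le> norm (B *v x) * (K * ?c)"
      by (simp add: AK mult_left_mono)
    finally have "\<bar>(B *v x) \<bullet> (A *v (x - P *v x))\<bar> \<le> norm (B *v x) * (K * ?c)" .
    moreover have "A *v x = A *v (P *v x) + A *v (x - P *v x)"
      by (simp add: matrix_vector_mult_diff_distrib)
    ultimately show "(norm (B *v x))^2 - norm (B *v x) * K * ?c \<le> (B *v x) \<bullet> (A *v x)"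
      using pos by (simp add: inner_add_right mult.assoc)
    have "(norm (A *v x))^2 \<le> (K * norm x)^2"
      by (rule power_mono[OF AK norm_ge_zero])
    then show "(norm (A *v x))^2 \<le> K^2 * (?a^2 + ?c^2)"
      by (simp add: P power_mult_distrib)
  qed simp_all
  finally show ?thesis
    by (simp add: P)
qed

text \<open>Under these hypotheses \<open>\<parallel>B - tA\<parallel> < \<parallel>B\<parallel>\<close> for small \<open>t > 0\<close>: split
  \<open>x = Px + (x - Px)\<close>; on the \<open>Px\<close> part \<open>A\<close> pulls \<open>Bx\<close> towards \<open>0\<close>, and the
  cross term coming from \<open>x - Px\<close>, which \<open>B\<close> annihilates, is of lower order.\<close>
lemma not_bj_orth_if_compression_positive:
  fixes A B P :: "complex^'n^'n"
  assumes "B \<noteq> 0" and BP: "B ** P = B"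
    and P: "\<And>x. (norm (P *v x))^2 + (norm (x - P *v x))^2 = (norm x)^2"
    and pos: "\<And>x. (norm (B *v x))^2 \<le> (B *v x) \<bullet> (A *v (P *v x))"
  shows "\<not> bj_orth B A"
proof
  assume orth: "bj_orth B A"
  define \<beta> where "\<beta> = opnorm B"
  define K where "K = opnorm A + 1"
  define t where "t = min (1/2) (\<beta>^2 / (2 * K^2))"
  have "\<beta> > 0" "K > 0"
    using opnorm_pos[OF \<open>B \<noteq> 0\<close>] opnorm_nonneg[of A] by (simp_all add: \<beta>_def K_def)
  have "t \<le> \<beta>^2 / (2 * K^2)"
    by (simp add: t_def)
  with \<open>K > 0\<close> have "2 * t * K^2 \<le> \<beta>^2"
    by (simp add: field_simps)
  moreover have "0 < t" "t \<le> 1/2"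
    using \<open>\<beta> > 0\<close> \<open>K > 0\<close> by (simp_all add: t_def)
  ultimately have t: "0 < t" "t \<le> 1/2" "2 * t * K^2 \<le> \<beta>^2"
    by simp_all
  let ?M = "\<chi> i j. B $ i $ j + complex_of_real (-t) * A $ i $ j"
  have "opnorm ?M \<le> sqrt (1 - t/2) * \<beta>"
  proof (rule opnorm_le)
    fix x :: "complex^'n"
    have "?M *v x = B *v x - t *\<^sub>R (A *v x)"
      unfolding matrix_vector_mult_lincomb by (simp add: scaleR_eq_smult_vec vec_eq_iff)
    then have "(norm (?M *v x))^2 \<le> (1 - t/2) * \<beta>^2 * (norm x)^2"
      using norm_perturbed_compression_le[OF BP P pos _ \<open>K > 0\<close>] t by (simp add: K_def \<beta>_def)
    also have "\<dots> = (sqrt (1 - t/2) * \<beta> * norm x)^2"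
      using t by (simp add: power_mult_distrib)
    finally show "norm (?M *v x) \<le> sqrt (1 - t/2) * \<beta> * norm x"
      by (rule power2_le_imp_le) (use t \<open>\<beta> > 0\<close> in auto)
  qed
  also have "\<dots> < \<beta>"
  proof -
    have "sqrt (1 - t/2) < 1"
      using t by simp
    then show ?thesis
      using \<open>\<beta> > 0\<close> by simp
  qed
  finally have "opnorm ?M < opnorm B"
    by (simp add: \<beta>_def)
  moreover have "opnorm B \<le> opnorm ?M"
    using orth unfolding bj_orth_def by blast
  ultimately show False
    by simp
qed

section \<open>Witnesses against left-symmetry\<close>

lemma opnorm_outer_unit:
  fixes w x0 :: "complex^'n"
  assumes "norm x0 = 1"
  shows "opnorm (outer w x0) = norm w"
proof (rule antisym)
  show "opnorm (outer w x0) \<le> norm w"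
  proof (rule opnorm_le)
    fix x :: "complex^'n"
    have "cmod (cinner x0 x) * norm w \<le> norm x * norm w"
      using cmod_cinner_le[of x0 x] assms by (simp add: mult_right_mono)
    then show "norm (outer w x0 *v x) \<le> norm w * norm x"
      by (simp add: norm_smult_vec mult.commute)
  qed
  have "norm (outer w x0 *v x0) = norm w"
    using assms by (simp add: cinner_self norm_smult_vec)
  then show "norm w \<le> opnorm (outer w x0)"
    using norm_matrix_vector_le_opnorm[of "outer w x0" x0] assms by simp
qed

lemma cmod_parallelogram: "(cmod (b - a))^2 + (cmod (a + b))^2 = 2 * ((cmod a)^2 + (cmod b)^2)"
  by (simp only: cmod_power2) (simp add: power2_eq_square algebra_simps)

lemma norm_twisted_pair_le:
  fixes x0 e w g x :: "complex^'n"
  assumes x0: "norm x0 = 1" and e: "norm e = 1" and "cinner x0 e = 0"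
    and "cinner w g = 0" and "norm g = norm w"
  shows "norm ((cinner e x - cinner x0 x) *s w + (cinner x0 x + cinner e x) *s g)
    \<le> sqrt 2 * norm w * norm x"
proof -
  let ?a = "cinner x0 x" and ?b = "cinner e x"
  have "(norm ((?b - ?a) *s w + (?a + ?b) *s g))^2
      = (cmod (?b - ?a) * norm w)^2 + (cmod (?a + ?b) * norm g)^2"
    by (rule norm_power2_orthogonal_combination) fact
  also have "\<dots> = (norm w)^2 * ((cmod (?b - ?a))^2 + (cmod (?a + ?b))^2)"
    using assms(5) by (simp add: power_mult_distrib algebra_simps)
  also have "\<dots> \<le> (norm w)^2 * (2 * (norm x)^2)"
    using bessel_orthonormal_pair[OF assms(1-3), of x]
    by (simp add: cmod_parallelogram mult_left_mono)
  also have "\<dots> = (sqrt 2 * norm w * norm x)^2"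
    by (simp add: power_mult_distrib)
  finally show ?thesis
    by (rule power2_le_imp_le) simp
qed

text \<open>In orthonormal bases \<open>x0, e\<close> of the domain and \<open>w/\<parallel>w\<parallel>, f\<close> of the target, \<open>A\<close>
  and \<open>B\<close> act as \<open>\<parallel>w\<parallel>\<close> times \<open>[1 0; 0 0]\<close> and \<open>[0 1; 1 1]\<close>; then \<open>\<parallel>B\<parallel> \<ge> \<surd>(13/5) \<parallel>w\<parallel>\<close>
  (test vector \<open>x0 + 2e\<close>) while \<open>\<parallel>B - A\<parallel> \<le> \<surd>2 \<parallel>w\<parallel>\<close>.\<close>
lemma outer_not_left_symmetric:
  fixes w x0 :: "complex^'n"
  assumes "CARD('n) \<ge> 2" and x0: "norm x0 = 1" and "w \<noteq> 0"
  shows "\<exists>B. bj_orth (outer w x0) B \<and> \<not> bj_orth B (outer w x0)"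
proof -
  let ?A = "outer w x0" and ?s = "norm w"
  interpret norming_vector ?A x0
    by unfold_locales (use x0 in \<open>simp_all add: opnorm_outer_unit cinner_self norm_smult_vec\<close>)
  obtain e where e: "norm e = 1" and x0e: "cinner x0 e = 0"
    using exists_unit_orthogonal[OF assms(1)] by blast
  obtain f where f: "norm f = 1" and wf: "cinner w f = 0"
    using exists_unit_orthogonal[OF assms(1)] by blast
  have ex0: "cinner e x0 = 0"
    using x0e cinner_commute_zero by blast
  have x0x0: "cinner x0 x0 = 1" and ee: "cinner e e = 1"
    using x0 e by (simp_all add: cinner_self)
  define B where "B = outer w e + outer (complex_of_real ?s *s f) (x0 + e)"
  have Bx: "B *v x = cinner e x *s w + (cinner x0 x + cinner e x) *s (?s *s f)" for x
    by (simp add: B_def matrix_vector_mult_add_rdistrib cinner_add_left)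
  have "bj_orth ?A B"
    by (rule bj_orth_if_orthogonal_image) (simp add: Bx ex0 x0x0 cinner_simps wf)
  moreover have "\<not> bj_orth B ?A"
  proof
    assume "bj_orth B ?A"
    let ?M = "\<chi> i j. B $ i $ j + (-1) * ?A $ i $ j"
    have "13 * ?s^2 \<le> 5 * (opnorm B)^2"
    proof -
      have "B *v (x0 + 2 *s e) = 2 *s w + 3 *s (?s *s f)"
        by (simp add: Bx cinner_simps ex0 x0x0 x0e ee vec_eq_iff algebra_simps)
      then have "(norm (B *v (x0 + 2 *s e)))^2 = 13 * ?s^2"
        using f by (simp add: norm_power2_orthogonal_combination cinner_scale_right wf
            norm_smult_vec power_mult_distrib)
      moreover have "(norm (x0 + 2 *s e))^2 = 5"
        using x0 e by (simp add: pythagoras_cinner cinner_scale_right x0e norm_smult_vec)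
      moreover have "(norm (B *v (x0 + 2 *s e)))^2 \<le> (opnorm B * norm (x0 + 2 *s e))^2"
        by (simp add: power_mono norm_matrix_vector_le_opnorm)
      ultimately show ?thesis
        by (simp add: power_mult_distrib)
    qed
    moreover have "opnorm ?M \<le> sqrt 2 * ?s"
    proof (rule opnorm_le)
      fix x :: "complex^'n"
      have "?M *v x = (cinner e x - cinner x0 x) *s w + (cinner x0 x + cinner e x) *s (?s *s f)"
        unfolding matrix_vector_mult_lincomb by (simp add: Bx vec_eq_iff algebra_simps)
      also have "norm \<dots> \<le> sqrt 2 * ?s * norm x"
        using f by (intro norm_twisted_pair_le[OF x0 e x0e]) (simp_all add: cinner_scale_right wf
            norm_smult_vec)
      finally show "norm (?M *v x) \<le> sqrt 2 * ?s * norm x" .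
    qed
    moreover have "opnorm B \<le> opnorm ?M"
      using \<open>bj_orth B ?A\<close> unfolding bj_orth_def by blast
    ultimately have "13 * ?s^2 \<le> 5 * (sqrt 2 * ?s)^2"
      using opnorm_nonneg[of B] by (smt (verit) power_mono)
    then show False
      using \<open>w \<noteq> 0\<close> by (simp add: power_mult_distrib)
  qed
  ultimately show ?thesis
    by blast
qed

context norming_vector
begin

lemma matrix_vector_mult_perp_decomp: "A *v x = A *v (perp_proj x0 *v x) + cinner x0 x *s (A *v x0)"
  by (simp add: perp_proj_mult_vec matrix_vector_mult_diff_distrib matrix_vector_mult_smult)

lemma eq_outer_if_perp_proj_zero:
  assumes "A ** perp_proj x0 = 0"
  shows "A = outer (A *v x0) x0"
proof -
  have "A *v x = outer (A *v x0) x0 *v x" for x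
  proof -
    have "A *v (perp_proj x0 *v x) = 0"
      using assms by (simp add: matrix_vector_mul_assoc)
    then show ?thesis
      using matrix_vector_mult_perp_decomp[of x] by simp
  qed
  then show ?thesis
    unfolding matrix_eq by blast
qed

text \<open>\<open>B = E A P\<close> kills \<open>x0\<close>, which gives \<open>A \<bottom> B\<close>; and \<open>\<langle>Bx, A P x\<rangle> = \<parallel>Bx\<parallel>\<^sup>2\<close>
  because \<open>E\<close> acts like an orthogonal projection, which rules out \<open>B \<bottom> A\<close>.\<close>
lemma bj_orth_compression:
  fixes E :: "complex^'n^'n"
  assumes E: "\<And>z. (E *v z) \<bullet> z = (norm (E *v z))^2"
    and "E ** A ** perp_proj x0 \<noteq> 0"
  shows "bj_orth A (E ** A ** perp_proj x0) \<and> \<not> bj_orth (E ** A ** perp_proj x0) A"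
proof
  let ?P = "perp_proj x0"
  let ?B = "E ** A ** ?P"
  have Bx: "?B *v x = E *v (A *v (?P *v x))" for x
    by (simp add: matrix_vector_mul_assoc[symmetric])
  show "bj_orth A ?B"
    by (rule bj_orth_if_orthogonal_image) (simp add: Bx perp_proj_self[OF norm_x0])
  show "\<not> bj_orth ?B A"
  proof (rule not_bj_orth_if_compression_positive)
    show "?B ** ?P = ?B"
      by (simp add: matrix_mul_assoc[symmetric] perp_proj_idem[OF norm_x0])
    show "(norm (?P *v x))^2 + (norm (x - ?P *v x))^2 = (norm x)^2" for x
      by (rule perp_proj_pythagoras[OF norm_x0])
    show "(norm (?B *v x))^2 \<le> (?B *v x) \<bullet> (A *v (?P *v x))" for x
      by (simp add: Bx E)
  qed fact
qed

text \<open>The range of \<open>A P\<close> is orthogonal to \<open>A x0\<close> (by \<open>cinner_image_x0\<close>), so if it lies in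
  \<open>span S\<close> while some member of \<open>S\<close> is not orthogonal to \<open>A x0\<close>, it only fills a proper
  subspace of \<open>span S\<close>; adding back the rank-one part \<open>x \<mapsto> \<langle>x0, x\<rangle> A x0\<close> gives
  \<open>rank A \<le> card S\<close>.\<close>
lemma rank_le_if_compression_in_span:
  assumes "finite S" and "v \<in> S" and "cinner v (A *v x0) \<noteq> 0"
    and span: "\<And>x. A *v (perp_proj x0 *v x) \<in> vec.span S"
  shows "rank A \<le> card S"
proof -
  have "cinner (A *v x0) v \<noteq> 0"
    using assms(3) cinner_commute_zero by blast
  then obtain F where "finite F" and "card F < card S"
    and F: "\<And>z. z \<in> vec.span S \<Longrightarrow> cinner (A *v x0) z = 0 \<Longrightarrow> z \<in> vec.span F"
    using orthogonal_part_of_span[OF assms(1,2)] by blast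
  have "A *v x \<in> vec.span (insert (A *v x0) F)" for x
  proof -
    have "cinner (A *v x0) (A *v (perp_proj x0 *v x)) = 0"
      by (simp add: cinner_image_x0 cinner_perp_proj[OF norm_x0])
    then have "A *v (perp_proj x0 *v x) \<in> vec.span (insert (A *v x0) F)"
      using F[OF span] vec.span_mono[of F "insert (A *v x0) F"] by blast
    moreover have "cinner x0 x *s (A *v x0) \<in> vec.span (insert (A *v x0) F)"
      by (intro vec.span_scale vec.span_base) simp
    ultimately show ?thesis
      by (subst matrix_vector_mult_perp_decomp) (rule vec.span_add)
  qed
  then have "rank A \<le> card (insert (A *v x0) F)"
    using \<open>finite F\<close> by (intro rank_le_card_if_range_in_span) simp_all
  also have "\<dots> \<le> card S"
    using \<open>finite F\<close> \<open>card F < card S\<close> card_insert_le_m1[of "card S" F] by simp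
  finally show ?thesis .
qed

lemma exists_bj_orth_not_symmetric_if_compression_leaves_span:
  fixes v u :: "'i \<Rightarrow> complex^'n"
  assumes "A *v (perp_proj x0 *v x) \<notin> vec.span (v ` I)"
  shows "\<exists>B. (\<forall>i\<in>I. cinner (v i) (B *v u i) = 0) \<and> bj_orth A B \<and> \<not> bj_orth B A"
proof -
  let ?P = "perp_proj x0"
  obtain y where "norm y = 1" and yS: "\<forall>g\<in>v ` I. cinner y g = 0"
    and "cinner y (A *v (?P *v x)) \<noteq> 0"
    using exists_unit_orthogonal_not_orthogonal[OF assms] by blast
  let ?B = "outer y y ** A ** ?P"
  have Bz: "?B *v z = cinner y (A *v (?P *v z)) *s y" for z
    by (simp add: matrix_vector_mul_assoc[symmetric])
  have "?B \<noteq> 0"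
    using Bz[of x] \<open>cinner y (A *v (?P *v x)) \<noteq> 0\<close> \<open>norm y = 1\<close> by auto
  moreover have "\<forall>i\<in>I. cinner (v i) y = 0"
    using yS cinner_commute_zero by blast
  then have "\<forall>i\<in>I. cinner (v i) (?B *v u i) = 0"
    by (simp add: Bz cinner_scale_right)
  ultimately show ?thesis
    using bj_orth_compression outer_self_positive[OF \<open>norm y = 1\<close>] by blast
qed

lemma exists_bj_orth_not_symmetric_in_constraint_space:
  fixes v u :: "'i \<Rightarrow> complex^'n"
  assumes "CARD('n) \<ge> 2" and "finite I"
    and AV: "\<forall>i\<in>I. cinner (v i) (A *v u i) = 0" and rank: "card I < rank A"
  shows "\<exists>B. (\<forall>i\<in>I. cinner (v i) (B *v u i) = 0) \<and> bj_orth A B \<and> \<not> bj_orth B A"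
proof -
  let ?P = "perp_proj x0" and ?w = "A *v x0" and ?S = "v ` I"
  consider (rank_one) "A ** ?P = 0"
    | (orth) "A ** ?P \<noteq> 0" "\<forall>i\<in>I. cinner (v i) ?w = 0"
    | (outside) x where "A *v (?P *v x) \<notin> vec.span ?S"
    | (inside) i where "i \<in> I" "cinner (v i) ?w \<noteq> 0" "\<forall>x. A *v (?P *v x) \<in> vec.span ?S"
    by blast
  then show ?thesis
  proof cases
    case rank_one
    obtain w where A: "A = outer w x0"
      using eq_outer_if_perp_proj_zero[OF rank_one] by blast
    with rank rank_outer_le_one[of w x0] have "card I = 0"
      by simp
    with \<open>finite I\<close> have "I = {}"
      by simp
    moreover have "w \<noteq> 0"
      using rank rank_le_card_if_range_in_span[of "{}" A] by (auto simp: A vec.span_zero)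
    ultimately show ?thesis
      using outer_not_left_symmetric[OF assms(1) norm_x0] A by blast
  next
    case orth
    have "\<forall>i\<in>I. cinner (v i) (A *v (?P *v u i)) = 0"
      using orth AV by (simp add: matrix_vector_mult_perp_decomp[of "u _"] cinner_simps)
    then have "\<forall>i\<in>I. cinner (v i) ((A ** ?P) *v u i) = 0"
      by (simp add: matrix_vector_mul_assoc[symmetric])
    moreover have "bj_orth A (A ** ?P) \<and> \<not> bj_orth (A ** ?P) A"
      using bj_orth_compression[of "mat 1"] orth by (simp add: power2_norm_eq_inner)
    ultimately show ?thesis
      by blast
  next
    case outside
    then show ?thesis
      by (rule exists_bj_orth_not_symmetric_if_compression_leaves_span)
  next
    case inside
    have "rank A \<le> card ?S"
      using inside \<open>finite I\<close> by (intro rank_le_if_compression_in_span) auto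
    also have "\<dots> \<le> card I"
      using \<open>finite I\<close> by (rule card_image_le)
    finally show ?thesis
      using rank by simp
  qed
qed

end

lemma sesq_eq_cinner: "sesq v X u = cinner v (X *v u)"
  by (simp add: sesq_def cinner_def)

theorem lemma3p3:
  fixes v u :: "nat \<Rightarrow> complex^'n" and k :: nat and A :: "complex^'n^'n"
  assumes "CARD('n) \<ge> 2"
    and "k \<le> CARD('n) - 1"
    and "\<And>i. i \<in> {1..k} \<Longrightarrow> norm (v i) = 1"
    and "\<And>i. i \<in> {1..k} \<Longrightarrow> norm (u i) = 1"
  defines "V \<equiv> {X :: (complex^'n^'n). \<forall>i\<in>{1..k}. sesq (v i) X (u i) = 0}"
  shows "(A \<in> V \<and> rank A > k \<longrightarrow> \<not> left_symmetric_rel V A)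
         \<and> \<not> (\<exists>B\<in>V. invertible B \<and> left_symmetric_rel V B)"
proof -
  have V: "X \<in> V \<longleftrightarrow> (\<forall>i\<in>{1..k}. cinner (v i) (X *v u i) = 0)" for X
    by (simp add: V_def sesq_eq_cinner)
  have "\<not> left_symmetric_rel V X" if "X \<in> V" and rank: "k < rank X" for X
  proof -
    obtain x0 where "norm x0 = 1" and "norm (X *v x0) = opnorm X"
      using opnorm_attained by blast
    then interpret norming_vector X x0
      by unfold_locales
    have XV: "\<forall>i\<in>{1..k}. cinner (v i) (X *v u i) = 0"
      using \<open>X \<in> V\<close> V by blast
    have "card {1..k} < rank X"
      using rank by simp
    then obtain B where "B \<in> V" and "bj_orth X B" and "\<not> bj_orth B X"
      using exists_bj_orth_not_symmetric_in_constraint_space[OF assms(1) finite_atLeastAtMost XV] V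
      by blast
    then show ?thesis
      unfolding left_symmetric_rel_def by blast
  qed
  moreover have "k < rank B" if "invertible B" for B :: "complex^'n^'n"
    using rank_invertible[OF that] assms(1,2) by simp
  ultimately show ?thesis
    by blast
qed

end
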